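(* Let $Y\sim N(\theta,\sigma^2)$ with $\sigma>0$, let $\tau\ge1$, and let $\theta_0=E_0(Y^2-\sigma^2\tau)_+$, where $E_0$ denotes expectation under $\theta=0$. Then $$\big(E(Y^2-\sigma^2\tau)_+-\theta_0\big)^2\le\max\Big\{6\sigma^2\theta^2+\sigma^4\frac{4\tau^{1/2}+18}{e^{\tau/2}},\;10\theta^4\Big\}.$$
   Context: $x_+=\max\{x,0\}$. *)

theory Defs
  imports "HOL-Probability.Probability"
begin

definition pos_part :: "real \<Rightarrow> real" where
  "pos_part x = max x 0"

text \<open>E_theta (Y^2 - sigma^2 tau)_+ for Y ~ N(theta, sigma^2); normal_density mu sigma uses
  the standard deviation sigma.\<close>
definition trunc_moment :: "real \<Rightarrow> real \<Rightarrow> real \<Rightarrow> real" where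
  "trunc_moment \<theta> \<sigma> \<tau> =
     integral\<^sup>L (density lborel (normal_density \<theta> \<sigma>)) (\<lambda>y. pos_part (y\<^sup>2 - \<sigma>\<^sup>2 * \<tau>))"

end

theory Submission
  imports Defs
begin

text \<open>Shifting Y ~ N(\<theta>, \<sigma>^2) to the centred X ~ N(0, \<sigma>^2), the difference
  E_\<theta> h(Y) - E_0 h(Y) with h y = (y^2 - \<sigma>^2 \<tau>)_+ becomes E D(X) with
  D x = h(\<theta> + x) - h(x). Since the positive part is 1-Lipschitz, |D x| \<le> |2 \<theta> x + \<theta>^2|,
  hence (E D)^2 \<le> E D^2 \<le> E (2 \<theta> X + \<theta>^2)^2 = 4 \<theta>^2 \<sigma>^2 + \<theta>^4. This is at most
  6 \<sigma>^2 \<theta>^2 when \<theta>^2 \<le> 2 \<sigma>^2 and at most 10 \<theta>^4 otherwise.\<close>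

lemma integral_normal_density_shift:
  fixes f :: "real \<Rightarrow> real"
  assumes [measurable]: "f \<in> borel_measurable borel"
  shows "integral\<^sup>L (density lborel (normal_density \<mu> \<sigma>)) f =
         integral\<^sup>L (density lborel (normal_density 0 \<sigma>)) (\<lambda>x. f (\<mu> + x))"
proof -
  have "integral\<^sup>L (density lborel (normal_density \<mu> \<sigma>)) f = (\<integral>y. normal_density \<mu> \<sigma> y * f y \<partial>lborel)"
    by (subst integral_density) auto
  also have "\<dots> = (\<integral>x. normal_density \<mu> \<sigma> (\<mu> + 1 * x) * f (\<mu> + 1 * x) \<partial>lborel)"
    by (subst lborel_integral_real_affine[where c=1 and t=\<mu>]) auto
  also have "\<dots> = (\<integral>x. normal_density 0 \<sigma> x * f (\<mu> + x) \<partial>lborel)"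
    by (simp add: normal_density_def)
  also have "\<dots> = integral\<^sup>L (density lborel (normal_density 0 \<sigma>)) (\<lambda>x. f (\<mu> + x))"
    by (subst integral_density) auto
  finally show ?thesis .
qed

lemma integrable_centered_normal_power:
  assumes "\<sigma> > 0"
  shows "integrable (density lborel (normal_density 0 \<sigma>)) (\<lambda>x. x ^ k)"
  using integrable_normal_moment[OF assms, of 0 k] by (subst integrable_density) auto

lemma integral_centered_normal_id:
  assumes "\<sigma> > 0"
  shows "integral\<^sup>L (density lborel (normal_density 0 \<sigma>)) (\<lambda>x. x) = 0"
  using integral_normal_moment_odd[OF assms, of 0 0] by (subst integral_density) auto

lemma integral_centered_normal_square:
  assumes "\<sigma> > 0"
  shows "integral\<^sup>L (density lborel (normal_density 0 \<sigma>)) (\<lambda>x. x\<^sup>2) = \<sigma>\<^sup>2"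
  using integral_normal_moment_even[OF assms, of 0 1] by (subst integral_density) auto

lemma affine_square_expand: "(\<lambda>x. (a * x + b)\<^sup>2) = (\<lambda>x::real. a\<^sup>2 * x\<^sup>2 + 2 * a * b * x + b\<^sup>2)"
  by (auto simp: power2_eq_square algebra_simps)

lemma integrable_centered_normal_affine_square:
  assumes "\<sigma> > 0"
  shows "integrable (density lborel (normal_density 0 \<sigma>)) (\<lambda>x. (a * x + b)\<^sup>2)"
proof -
  interpret prob_space "density lborel (normal_density 0 \<sigma>)"
    using prob_space_normal_density[OF assms] .
  show ?thesis
    using integrable_centered_normal_power[OF assms, of 1] integrable_centered_normal_power[OF assms, of 2]
    by (simp add: affine_square_expand)
qed

lemma integral_centered_normal_affine_square:
  assumes "\<sigma> > 0"
  shows "integral\<^sup>L (density lborel (normal_density 0 \<sigma>)) (\<lambda>x. (a * x + b)\<^sup>2) = a\<^sup>2 * \<sigma>\<^sup>2 + b\<^sup>2"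
proof -
  interpret prob_space "density lborel (normal_density 0 \<sigma>)"
    using prob_space_normal_density[OF assms] .
  show ?thesis
    using integrable_centered_normal_power[OF assms, of 1] integrable_centered_normal_power[OF assms, of 2]
      integral_centered_normal_id[OF assms] integral_centered_normal_square[OF assms]
    by (simp add: affine_square_expand prob_space[simplified])
qed

lemma integrable_centered_normal_lipschitz_of_square:
  fixes f :: "real \<Rightarrow> real"
  assumes "\<sigma> > 0" and f_lipschitz: "L-lipschitz_on UNIV f"
  shows "integrable (density lborel (normal_density 0 \<sigma>)) (\<lambda>x. f (x\<^sup>2))"
proof (rule Bochner_Integration.integrable_bound)
  interpret prob_space "density lborel (normal_density 0 \<sigma>)"
    using prob_space_normal_density[OF assms(1)] .
  show "integrable (density lborel (normal_density 0 \<sigma>)) (\<lambda>x. \<bar>f 0\<bar> + L * x ^ 2)"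
    using integrable_centered_normal_power[OF assms(1), of 2] by simp
  show "AE x in density lborel (normal_density 0 \<sigma>). norm (f (x\<^sup>2)) \<le> norm (\<bar>f 0\<bar> + L * x ^ 2)"
  proof (intro AE_I2)
    fix x :: real
    have "\<bar>f (x\<^sup>2) - f 0\<bar> \<le> L * x\<^sup>2"
      using lipschitz_onD[OF f_lipschitz, of "x\<^sup>2" 0] by (simp add: dist_real_def)
    then show "norm (f (x\<^sup>2)) \<le> norm (\<bar>f 0\<bar> + L * x ^ 2)"
      using lipschitz_on_nonneg[OF f_lipschitz] by simp
  qed
  have [measurable]: "f \<in> borel_measurable borel"
    using lipschitz_on_continuous_on[OF f_lipschitz] by (rule borel_measurable_continuous_onI)
  show "(\<lambda>x. f (x\<^sup>2)) \<in> borel_measurable (density lborel (normal_density 0 \<sigma>))"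
    by measurable
qed

lemma (in prob_space) square_expectation_le:
  fixes X :: "'a \<Rightarrow> real"
  assumes "integrable M X" and "integrable M (\<lambda>x. (X x)\<^sup>2)"
  shows "(expectation X)\<^sup>2 \<le> expectation (\<lambda>x. (X x)\<^sup>2)"
  using variance_eq[OF assms] variance_positive[of X] by simp

lemma lipschitz_of_square_shift_sq_le:
  fixes f :: "real \<Rightarrow> real"
  assumes "1-lipschitz_on UNIV f"
  shows "(f ((\<theta> + x)\<^sup>2) - f (x\<^sup>2))\<^sup>2 \<le> (2 * \<theta> * x + \<theta>\<^sup>2)\<^sup>2"
proof -
  have "\<bar>f ((\<theta> + x)\<^sup>2) - f (x\<^sup>2)\<bar> \<le> \<bar>(\<theta> + x)\<^sup>2 - x\<^sup>2\<bar>"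
    using lipschitz_onD[OF assms] by (simp add: dist_real_def)
  then show ?thesis
    by (simp add: abs_le_square_iff power2_eq_square algebra_simps)
qed

lemma normal_lipschitz_of_square_shift:
  fixes f :: "real \<Rightarrow> real"
  assumes "\<sigma> > 0" and f_lipschitz: "1-lipschitz_on UNIV f"
  shows "(integral\<^sup>L (density lborel (normal_density \<theta> \<sigma>)) (\<lambda>y. f (y\<^sup>2))
           - integral\<^sup>L (density lborel (normal_density 0 \<sigma>)) (\<lambda>y. f (y\<^sup>2)))\<^sup>2
         \<le> 4 * \<theta>\<^sup>2 * \<sigma>\<^sup>2 + \<theta> ^ 4"
proof -
  define N where "N = density lborel (normal_density 0 \<sigma>)"
  interpret N: prob_space N
    unfolding N_def using prob_space_normal_density[OF assms(1)] .
  have [measurable]: "f \<in> borel_measurable borel"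
    using lipschitz_on_continuous_on[OF f_lipschitz] by (rule borel_measurable_continuous_onI)
  define D where "D x = f ((\<theta> + x)\<^sup>2) - f (x\<^sup>2)" for x
  have [measurable]: "D \<in> borel_measurable N"
    unfolding D_def N_def by measurable
  define B where "B x = 2 * \<theta> * x + \<theta>\<^sup>2" for x
  have D_sq_le_B_sq: "(D x)\<^sup>2 \<le> (B x)\<^sup>2" for x
    unfolding D_def B_def using f_lipschitz by (rule lipschitz_of_square_shift_sq_le)
  have int_B_sq: "integrable N (\<lambda>x. (B x)\<^sup>2)"
    unfolding N_def B_def by (rule integrable_centered_normal_affine_square[OF assms(1)])
  have int_D_sq: "integrable N (\<lambda>x. (D x)\<^sup>2)"
    by (rule Bochner_Integration.integrable_bound[OF int_B_sq]) (simp_all add: D_sq_le_B_sq)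
  have int_f: "integrable N (\<lambda>x. f (x\<^sup>2))"
    unfolding N_def using assms by (rule integrable_centered_normal_lipschitz_of_square)
  have int_D: "integrable N D"
    using N.square_integrable_imp_integrable[OF _ int_D_sq] by simp
  have "integral\<^sup>L (density lborel (normal_density \<theta> \<sigma>)) (\<lambda>y. f (y\<^sup>2)) = integral\<^sup>L N (\<lambda>x. D x + f (x\<^sup>2))"
    by (subst integral_normal_density_shift) (simp_all add: N_def D_def)
  then have "integral\<^sup>L (density lborel (normal_density \<theta> \<sigma>)) (\<lambda>y. f (y\<^sup>2))
        - integral\<^sup>L N (\<lambda>y. f (y\<^sup>2)) = N.expectation D"
    using int_D int_f by simp
  moreover have "(N.expectation D)\<^sup>2 \<le> N.expectation (\<lambda>x. (D x)\<^sup>2)"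
    using int_D int_D_sq by (rule N.square_expectation_le)
  moreover have "\<dots> \<le> N.expectation (\<lambda>x. (B x)\<^sup>2)"
    using int_D_sq int_B_sq D_sq_le_B_sq by (rule integral_mono)
  moreover have "\<dots> = 4 * \<theta>\<^sup>2 * \<sigma>\<^sup>2 + \<theta> ^ 4"
    unfolding N_def B_def using integral_centered_normal_affine_square[OF assms(1), of "2 * \<theta>" "\<theta>\<^sup>2"]
    by (simp add: power_mult_distrib flip: power_mult)
  ultimately show ?thesis
    by (simp add: N_def)
qed

lemma quartic_le_max:
  fixes a b c :: real
  assumes "0 \<le> a" "0 \<le> b" "0 \<le> c"
  shows "4 * a * b + a\<^sup>2 \<le> max (6 * b * a + c) (10 * a\<^sup>2)"
proof (cases "a \<le> 2 * b")
  case True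
  then have "a\<^sup>2 \<le> 2 * b * a"
    using assms by (simp add: power2_eq_square mult_right_mono)
  then show ?thesis using assms by (simp add: algebra_simps)
next
  case False
  then have "4 * a * b \<le> 2 * a\<^sup>2"
    using assms by (simp add: power2_eq_square mult_left_mono)
  then show ?thesis
    using zero_le_power2[of a] by (intro order_trans[OF _ max.cobounded2]) linarith
qed

theorem lemma2:
  fixes \<theta> \<sigma> \<tau> :: real
  assumes "\<sigma> > 0" and "\<tau> \<ge> 1"
  shows "(trunc_moment \<theta> \<sigma> \<tau> - trunc_moment 0 \<sigma> \<tau>)\<^sup>2
           \<le> max (6 * \<sigma>\<^sup>2 * \<theta>\<^sup>2 + \<sigma> ^ 4 * (4 * sqrt \<tau> + 18) / exp (\<tau> / 2))
                 (10 * \<theta> ^ 4)"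
proof -
  have "1-lipschitz_on UNIV (\<lambda>u. pos_part (u - \<sigma>\<^sup>2 * \<tau>))"
    by (intro lipschitz_onI) (auto simp: dist_real_def pos_part_def)
  from normal_lipschitz_of_square_shift[OF assms(1) this, of \<theta>]
  have "(trunc_moment \<theta> \<sigma> \<tau> - trunc_moment 0 \<sigma> \<tau>)\<^sup>2 \<le> 4 * \<theta>\<^sup>2 * \<sigma>\<^sup>2 + (\<theta>\<^sup>2)\<^sup>2"
    by (simp add: trunc_moment_def flip: power_mult)
  also have "\<dots> \<le> max (6 * \<sigma>\<^sup>2 * \<theta>\<^sup>2 + \<sigma> ^ 4 * (4 * sqrt \<tau> + 18) / exp (\<tau> / 2)) (10 * (\<theta>\<^sup>2)\<^sup>2)"
    using assms by (intro quartic_le_max) auto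
  finally show ?thesis
    by (simp flip: power_mult)
qed

end
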